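(* Let $K>0$ and let $\psi$ be a PTL formula over $\Sigma$ with operator depth $\mathrm{od}(\psi)\le K$. Then for all $u,v,s,t\in\Sigma^*$: $u(st)^Ksv\models\psi$ if and only if $u(st)^Kv\models\psi$.
   Context: PTL formulas over a finite alphabet $\Sigma$ are built from $\pi_a$ ($a\in\Sigma$), $\wedge$, $\neg$ and $\mathbf{P}$; for $w=w_1\cdots w_N$ and $n\in\{1,\dots,N+1\}$: $w,n\models\pi_a$ iff $n\le N$ and $w_n=a$; Boolean connectives as usual; $w,n\models\mathbf{P}\psi$ iff $w,m\models\psi$ for some $1\le m<n$. $w\models\psi$ means $w,|w|+1\models\psi$. The operator depth is defined by $\mathrm{od}(\pi_a)=0$, $\mathrm{od}(\psi_1\wedge\psi_2)=\max(\mathrm{od}(\psi_1),\mathrm{od}(\psi_2))$, $\mathrm{od}(\neg\psi)=\mathrm{od}(\psi)$, $\mathrm{od}(\mathbf{P}\psi)=\mathrm{od}(\psi)+1$. $(st)^K$ denotes the $K$-fold concatenation of $st$. *)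

theory Defs
  imports Main
begin

datatype 'a ptl = Atom 'a | Conj "'a ptl" "'a ptl" | Neg "'a ptl" | Past "'a ptl"

text \<open>Satisfaction at position n (positions are 1-based, 1..N+1 for a word of length N).\<close>
fun sat :: "'a list \<Rightarrow> nat \<Rightarrow> 'a ptl \<Rightarrow> bool" where
  "sat w n (Atom a) = (1 \<le> n \<and> n \<le> length w \<and> w ! (n - 1) = a)"
| "sat w n (Conj f g) = (sat w n f \<and> sat w n g)"
| "sat w n (Neg f) = (\<not> sat w n f)"
| "sat w n (Past f) = (\<exists>m. 1 \<le> m \<and> m < n \<and> sat w m f)"

definition models :: "'a list \<Rightarrow> 'a ptl \<Rightarrow> bool" where
  "models w f = sat w (length w + 1) f"

fun od :: "'a ptl \<Rightarrow> nat" where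
  "od (Atom a) = 0"
| "od (Conj f g) = max (od f) (od g)"
| "od (Neg f) = od f"
| "od (Past f) = od f + 1"

definition wpow :: "'a list \<Rightarrow> nat \<Rightarrow> 'a list" where
  "wpow x K = concat (replicate K x)"

end

theory Submission
  imports Defs
begin

text \<open>Call two words d-equivalent if they satisfy the same formulas of operator depth at most d.
  Since \<open>\<^bold>P\<close> only looks at proper prefixes, (d+1)-equivalence follows from a back-and-forth
  condition: every letter occurrence in one word is matched by an occurrence of the same letter in
  the other word with d-equivalent prefix. Inserting a prefix y of x after \<open>u x\<^sup>n\<close> preserves
  d-equivalence for d \<le> n, by induction on d: an occurrence inside the inserted y is matched by
  the same occurrence in the last copy of x, whose prefixes \<open>u x\<^sup>n b\<close> and \<open>u x\<^sup>m b\<close> (n = m + 1)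
  are (d-1)-equivalent by induction; occurrences after y have prefixes of the same shape with a
  shorter tail.\<close>

definition ptl_equiv :: "nat \<Rightarrow> 'a list \<Rightarrow> 'a list \<Rightarrow> bool" where
  "ptl_equiv d w w' \<longleftrightarrow> (\<forall>f. od f \<le> d \<longrightarrow> models w f = models w' f)"

lemma ptl_equiv_refl: "ptl_equiv d w w"
  by (simp add: ptl_equiv_def)

lemma ptl_equiv_sym: "ptl_equiv d w w' \<Longrightarrow> ptl_equiv d w' w"
  by (simp add: ptl_equiv_def)

text \<open>No atom holds at the end position \<open>|w| + 1\<close>, so a depth-0 formula is a constant.\<close>

lemma models_od_0: "od f = 0 \<Longrightarrow> models w f = models w' f"
  by (induction f) (auto simp: models_def)

lemma ptl_equiv_0: "ptl_equiv 0 w w'"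
  by (simp add: ptl_equiv_def models_od_0)

lemma sat_append: "m \<le> length p \<Longrightarrow> sat (p @ q) m f = sat p m f"
  by (induction f arbitrary: m) (auto simp: nth_append)

definition sat_last :: "'a list \<Rightarrow> 'a \<Rightarrow> 'a ptl \<Rightarrow> bool" where
  "sat_last q a f \<longleftrightarrow> sat (q @ [a]) (length q + 1) f"

lemma sat_last_Past: "sat_last q a (Past f) = models q (Past f)"
  by (auto simp: sat_last_def models_def sat_append)

lemma models_Past_iff: "models w (Past f) \<longleftrightarrow> (\<exists>q a r. w = q @ a # r \<and> sat_last q a f)"
proof
  assume "models w (Past f)"
  then obtain m where m: "1 \<le> m" "m \<le> length w" "sat w m f"
    by (auto simp: models_def)
  define q a r where "q = take (m - 1) w" and "a = w ! (m - 1)" and "r = drop m w"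
  have w: "w = q @ a # r"
    using m id_take_nth_drop[of "m - 1" w] by (simp add: q_def a_def r_def)
  have "length q = m - 1"
    using m by (simp add: q_def)
  then have "sat_last q a f"
    using m w sat_append[of m "q @ [a]" r f] by (simp add: sat_last_def)
  with w show "\<exists>q a r. w = q @ a # r \<and> sat_last q a f"
    by blast
next
  assume "\<exists>q a r. w = q @ a # r \<and> sat_last q a f"
  then obtain q a r where "w = q @ a # r" and "sat_last q a f"
    by blast
  then show "models w (Past f)"
    using sat_append[of "length q + 1" "q @ [a]" r f]
    by (auto simp: models_def sat_last_def intro!: exI[of _ "length q + 1"])
qed

lemma sat_last_cong:
  assumes "ptl_equiv d q q'" and "od f \<le> d"
  shows "sat_last q a f = sat_last q' a f"
  using assms
proof (induction f)
  case (Past f)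
  then show ?case
    by (simp add: sat_last_Past ptl_equiv_def)
qed (auto simp: sat_last_def nth_append)

definition ptl_forth :: "nat \<Rightarrow> 'a list \<Rightarrow> 'a list \<Rightarrow> bool" where
  "ptl_forth d w w' \<longleftrightarrow>
    (\<forall>q a r. w = q @ a # r \<longrightarrow> (\<exists>q' r'. w' = q' @ a # r' \<and> ptl_equiv d q q'))"

lemma models_Past_forth:
  assumes "ptl_forth d w w'" and "od f \<le> d" and "models w (Past f)"
  shows "models w' (Past f)"
proof -
  obtain q a r where "w = q @ a # r" and "sat_last q a f"
    using assms(3) by (auto simp: models_Past_iff)
  with assms(1) obtain q' r' where "w' = q' @ a # r'" and "ptl_equiv d q q'"
    unfolding ptl_forth_def by blast
  with \<open>sat_last q a f\<close> assms(2) show ?thesis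
    by (auto simp: models_Past_iff sat_last_cong)
qed

lemma ptl_equiv_SucI:
  assumes "ptl_forth d w w'" and "ptl_forth d w' w"
  shows "ptl_equiv (Suc d) w w'"
  unfolding ptl_equiv_def
proof (intro allI impI)
  fix f :: "'a ptl"
  show "od f \<le> Suc d \<Longrightarrow> models w f = models w' f"
  proof (induction f)
    case (Past f)
    then show ?case
      using models_Past_forth[OF assms(1)] models_Past_forth[OF assms(2)] by auto
  qed (auto simp: models_def)
qed

lemma append_eq_append_Cons_cases:
  assumes "p @ s = q @ a # r"
  obtains r0 where "p = q @ a # r0" and "r = r0 @ s"
    | c where "s = c @ a # r" and "q = p @ c"
  using assms by (auto simp: append_eq_append_conv2 append_eq_Cons_conv)

lemma ptl_forth_insert:
  assumes "\<And>c. ptl_equiv d (p @ y @ c) (p @ c)"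
  shows "ptl_forth d (p @ z) (p @ y @ z)"
  unfolding ptl_forth_def
proof (intro allI impI)
  fix q a r assume "p @ z = q @ a # r"
  then show "\<exists>q' r'. p @ y @ z = q' @ a # r' \<and> ptl_equiv d q q'"
  proof (cases rule: append_eq_append_Cons_cases)
    case (1 r0)
    then show ?thesis
      using ptl_equiv_refl by fastforce
  next
    case (2 c)
    then have "p @ y @ z = (p @ y @ c) @ a # r" and "ptl_equiv d q (p @ y @ c)"
      using ptl_equiv_sym[OF assms] by auto
    then show ?thesis
      by blast
  qed
qed

lemma ptl_forth_delete:
  assumes p: "p = p0 @ y @ y2"
    and inside: "\<And>b. ptl_equiv d (p @ b) (p0 @ b)"
    and after: "\<And>c. ptl_equiv d (p @ y @ c) (p @ c)"
  shows "ptl_forth d (p @ y @ z) (p @ z)"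
  unfolding ptl_forth_def
proof (intro allI impI)
  fix q a r assume "p @ y @ z = q @ a # r"
  then show "\<exists>q' r'. p @ z = q' @ a # r' \<and> ptl_equiv d q q'"
  proof (cases rule: append_eq_append_Cons_cases)
    case (1 r0)
    then show ?thesis
      using ptl_equiv_refl by fastforce
  next
    case (2 b)
    from \<open>y @ z = b @ a # r\<close> show ?thesis
    proof (cases rule: append_eq_append_Cons_cases)
      case (1 r0)
      then have "p @ z = (p0 @ b) @ a # (r0 @ y2 @ z)"
        using p by simp
      with \<open>q = p @ b\<close> inside show ?thesis
        by blast
    next
      case (2 c)
      then have "p @ z = (p @ c) @ a # r"
        by simp
      moreover have "ptl_equiv d q (p @ c)"
        using \<open>q = p @ b\<close> \<open>b = y @ c\<close> after by simp
      ultimately show ?thesis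
        by blast
    qed
  qed
qed

lemma wpow_Suc: "wpow x (Suc n) = wpow x n @ x"
  unfolding wpow_def by (induction n) auto

lemma ptl_equiv_pump:
  assumes "d \<le> n" and "x = y @ y2"
  shows "ptl_equiv d (u @ wpow x n @ y @ z) (u @ wpow x n @ z)"
  using assms
proof (induction d arbitrary: n y y2 z)
  case 0
  show ?case
    by (rule ptl_equiv_0)
next
  case (Suc d)
  then obtain m where n: "n = Suc m" and "d \<le> m"
    by (cases n) auto
  have after: "\<And>c. ptl_equiv d (u @ wpow x n @ y @ c) (u @ wpow x n @ c)"
    using Suc by simp
  have inside: "\<And>b. ptl_equiv d ((u @ wpow x n) @ b) ((u @ wpow x m) @ b)"
    using Suc.IH[OF \<open>d \<le> m\<close>, of x "[]"] by (simp add: n wpow_Suc)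
  have "u @ wpow x n = (u @ wpow x m) @ y @ y2"
    using Suc.prems(2) by (simp add: n wpow_Suc)
  from ptl_forth_delete[OF this inside] after
  have "ptl_forth d ((u @ wpow x n) @ y @ z) ((u @ wpow x n) @ z)"
    by simp
  moreover have "ptl_forth d ((u @ wpow x n) @ z) ((u @ wpow x n) @ y @ z)"
    by (rule ptl_forth_insert) (use after in simp)
  ultimately show ?case
    by (simp add: ptl_equiv_SucI)
qed

theorem mainTheorem11:
  fixes \<psi> :: "('a::finite) ptl" and K :: nat and u v s t :: "'a list"
  assumes "K > 0" and "od \<psi> \<le> K"
  shows "models (u @ wpow (s @ t) K @ s @ v) \<psi> \<longleftrightarrow> models (u @ wpow (s @ t) K @ v) \<psi>"
  using ptl_equiv_pump[of K K "s @ t" s t u v] assms(2) by (simp add: ptl_equiv_def)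

end
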